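(* Let $M$ be a complete metric space and let $C^*(M)$ denote the normed space of all bounded continuous $\mathbb{K}$-valued functions on $M$ (where $\mathbb{K}=\mathbb{R}$ or $\mathbb{C}$), equipped with the supremum norm. If $C^*(M)$ admits an isometric shift, then $M$ is separable.
   Context: For a normed space $\mathcal{K}$, a map $T:\mathcal{K}\to\mathcal{K}$ is an (isometric) shift operator if (1) $T$ is a linear isometry, (2) the range $T(\mathcal{K})$ has codimension $1$ in $\mathcal{K}$, and (3) $\bigcap_{n=1}^{\infty} T^n(\mathcal{K})=\{0\}$. *)

theory Defs
  imports "HOL-Analysis.Analysis"
begin

definition scaleK_bcontfun :: "'k::real_normed_field \<Rightarrow> ('a::topological_space \<Rightarrow>\<^sub>C 'k) \<Rightarrow> ('a \<Rightarrow>\<^sub>C 'k)" where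
  "scaleK_bcontfun c f = Bcontfun (\<lambda>x. c * apply_bcontfun f x)"

definition isometric_shift :: "(('a::topological_space \<Rightarrow>\<^sub>C 'k::real_normed_field) \<Rightarrow> ('a \<Rightarrow>\<^sub>C 'k)) \<Rightarrow> bool" where
  "isometric_shift T \<longleftrightarrow>
     (\<forall>f g. T (f + g) = T f + T g) \<and>
     (\<forall>c f. T (scaleK_bcontfun c f) = scaleK_bcontfun c (T f)) \<and>
     (\<forall>f. norm (T f) = norm f) \<and>
     (\<exists>g. g \<notin> range T \<and> (\<forall>f. \<exists>h c. f = T h + scaleK_bcontfun c g)) \<and>
     (\<Inter>n\<in>{1..}. range (T ^^ n)) = {0}"

end

theory Submission
  imports Defs
begin

text \<open>If M is not separable, it contains an uncountable e-separated set D, and the bumps of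
  radius e/2 around the points of D have pairwise disjoint supports; a bounded linear
  functional on C*(M) can be nonzero on only countably many of them. On the other hand an
  isometric shift T with range complemented by g yields a countable separating family of
  bounded linear functionals: writing f = T (R f) + c(f) g, the coefficients c(R^n f) are
  bounded (range T is closed, so g has positive distance from it) and they all vanish
  only if f lies in every range of T^n, i.e. f = 0.\<close>

lemma scaleK_bcontfun_mem: "(\<lambda>x. c * apply_bcontfun f x) \<in> bcontfun"
  for f :: "'a::topological_space \<Rightarrow>\<^sub>C 'k::real_normed_field"
  by (rule bcontfun_normI[where b = "norm c * norm f"])
    (simp_all add: continuous_on_mult_left norm_mult mult_left_mono norm_bounded)

lemma apply_scaleK_bcontfun [simp]: "apply_bcontfun (scaleK_bcontfun c f) x = c * apply_bcontfun f x"
  unfolding scaleK_bcontfun_def by (simp add: Bcontfun_inverse scaleK_bcontfun_mem)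

lemma scaleK_bcontfun_zero [simp]: "scaleK_bcontfun 0 f = 0"
  by (rule bcontfun_eqI) simp

lemma norm_scaleK_bcontfun_le: "norm (scaleK_bcontfun c f) \<le> norm c * norm f"
  for f :: "'a::topological_space \<Rightarrow>\<^sub>C 'k::real_normed_field"
  by (rule norm_bound) (simp add: norm_mult mult_left_mono norm_bounded)

lemma norm_scaleK_bcontfun: "norm (scaleK_bcontfun c f) = norm c * norm f"
  for f :: "'a::topological_space \<Rightarrow>\<^sub>C 'k::real_normed_field"
proof (cases "c = 0")
  case False
  have "f = scaleK_bcontfun (inverse c) (scaleK_bcontfun c f)"
    using False by (intro bcontfun_eqI) simp
  then have "norm f \<le> norm (inverse c) * norm (scaleK_bcontfun c f)"
    by (metis norm_scaleK_bcontfun_le)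
  then have "norm c * norm f \<le> norm c * (norm (inverse c) * norm (scaleK_bcontfun c f))"
    by (simp add: mult_left_mono)
  also have "\<dots> = norm (scaleK_bcontfun c f)"
    using False by (simp add: norm_inverse)
  finally show ?thesis using norm_scaleK_bcontfun_le antisym by blast
qed (use norm_scaleK_bcontfun_le[of 0 f] in simp)

lemma scaleR_eq_scaleK_bcontfun: "r *\<^sub>R f = scaleK_bcontfun (of_real r) f"
  for f :: "'a::topological_space \<Rightarrow>\<^sub>C 'k::real_normed_field"
  by (rule bcontfun_eqI) (simp add: scaleR_conv_of_real)

lemma apply_bcontfun_sum: "apply_bcontfun (sum F S) y = (\<Sum>x\<in>S. apply_bcontfun (F x) y)"
  by (induction S rule: infinite_finite_induct) auto

lemma maximal_separated_set:
  fixes e :: real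
  assumes "e > 0"
  obtains D :: "'a::metric_space set"
  where "pairwise (\<lambda>x x'. e \<le> dist x x') D" "\<And>y. \<exists>x\<in>D. dist x y < e"
proof -
  define \<S> where "\<S> = {D::'a set. pairwise (\<lambda>x x'. e \<le> dist x x') D}"
  have "\<exists>D\<in>\<S>. \<forall>D'\<in>\<S>. D \<subseteq> D' \<longrightarrow> D' = D"
    by (rule Zorn_Lemma) (auto simp: \<S>_def chains_def intro: pairwise_chain_Union)
  then obtain D where D: "D \<in> \<S>" and max: "\<And>D'. D' \<in> \<S> \<Longrightarrow> D \<subseteq> D' \<Longrightarrow> D' = D"
    by blast
  have "\<exists>x\<in>D. dist x y < e" for y
  proof (rule ccontr)
    assume far: "\<not> (\<exists>x\<in>D. dist x y < e)"
    then have "insert y D \<in> \<S>"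
      using D by (auto simp: \<S>_def pairwise_insert dist_commute not_less)
    then have "y \<in> D" using max by blast
    then show False using far \<open>e > 0\<close> by auto
  qed
  then show thesis using that D by (auto simp: \<S>_def)
qed

lemma separable_space_if_separated_sets_countable:
  assumes "\<And>e (D :: 'a set). e > 0 \<Longrightarrow> pairwise (\<lambda>x x'. e \<le> dist x x') D \<Longrightarrow> countable D"
  shows "separable_space (euclidean :: 'a::metric_space topology)"
proof -
  obtain D :: "nat \<Rightarrow> 'a set"
    where sep: "\<And>n. pairwise (\<lambda>x x'. 1 / Suc n \<le> dist x x') (D n)"
      and net: "\<And>n y. \<exists>x\<in>D n. dist x y < 1 / Suc n"
    using maximal_separated_set[of "1 / Suc _"] by (metis of_nat_0_less_iff zero_less_Suc zero_less_divide_1_iff)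
  have "y \<in> closure (\<Union>n. D n)" for y
    unfolding closure_approachable
  proof (intro allI impI)
    fix r :: real assume "r > 0"
    then obtain n where "1 / Suc n < r" by (rule nat_approx_posE)
    then show "\<exists>x\<in>\<Union>n. D n. dist x y < r" using net[of n y] by force
  qed
  then have "closure (\<Union>n. D n) = UNIV" by blast
  moreover have "countable (D n)" for n
    by (rule assms[OF _ sep]) simp
  ultimately show ?thesis
    unfolding separable_space_def by (intro exI[of _ "\<Union>n. D n"]) auto
qed

definition bcontfun_dual :: "(('a::topological_space \<Rightarrow>\<^sub>C 'k::real_normed_field) \<Rightarrow> 'k) set" where
  "bcontfun_dual = {\<phi>. (\<forall>f g. \<phi> (f + g) = \<phi> f + \<phi> g) \<and>
                      (\<forall>c f. \<phi> (scaleK_bcontfun c f) = c * \<phi> f) \<and>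
                      (\<exists>B. \<forall>f. norm (\<phi> f) \<le> B * norm f)}"

lemma bcontfun_dualI:
  assumes "\<And>f g. \<phi> (f + g) = \<phi> f + \<phi> g" "\<And>c f. \<phi> (scaleK_bcontfun c f) = c * \<phi> f"
    "\<And>f. norm (\<phi> f) \<le> B * norm f"
  shows "\<phi> \<in> bcontfun_dual"
  using assms unfolding bcontfun_dual_def by blast

lemma bcontfun_dualD:
  assumes "\<phi> \<in> bcontfun_dual"
  shows bcontfun_dual_add: "\<phi> (f + g) = \<phi> f + \<phi> g"
    and bcontfun_dual_scaleK: "\<phi> (scaleK_bcontfun c f) = c * \<phi> f"
  using assms unfolding bcontfun_dual_def by blast+

lemma bcontfun_dual_boundE:
  assumes "\<phi> \<in> bcontfun_dual"
  obtains B where "B \<ge> 0" "\<And>f. norm (\<phi> f) \<le> B * norm f"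
proof -
  obtain B where "\<And>f. norm (\<phi> f) \<le> B * norm f"
    using assms unfolding bcontfun_dual_def by blast
  then have "norm (\<phi> f) \<le> max B 0 * norm f" for f
    by (meson max.cobounded1 mult_right_mono norm_ge_zero order_trans)
  then show thesis using that[of "max B 0"] by simp
qed

lemma bcontfun_dual_sum:
  assumes "\<phi> \<in> bcontfun_dual"
  shows "\<phi> (sum F S) = (\<Sum>x\<in>S. \<phi> (F x))"
proof -
  have "\<phi> 0 = 0"
    using bcontfun_dual_add[OF assms, of 0 0] by simp
  then show ?thesis
    by (induction S rule: infinite_finite_induct) (auto simp: bcontfun_dual_add[OF assms])
qed

lemma norm_sum_disjoint_supports_le:
  fixes F :: "'b \<Rightarrow> ('a::topological_space \<Rightarrow>\<^sub>C 'k::real_normed_field)"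
  assumes "finite S" "r \<ge> 0" "\<And>x. x \<in> S \<Longrightarrow> norm (F x) \<le> 1" "\<And>x. x \<in> S \<Longrightarrow> norm (c x) \<le> r"
    and disj: "disjoint_family_on (\<lambda>x. {y. apply_bcontfun (F x) y \<noteq> 0}) S"
  shows "norm (\<Sum>x\<in>S. scaleK_bcontfun (c x) (F x)) \<le> r"
proof (rule norm_bound)
  fix y
  show "norm (apply_bcontfun (\<Sum>x\<in>S. scaleK_bcontfun (c x) (F x)) y) \<le> r"
  proof (cases "\<exists>x\<in>S. apply_bcontfun (F x) y \<noteq> 0")
    case True
    then obtain x where x: "x \<in> S" "apply_bcontfun (F x) y \<noteq> 0" by blast
    have "apply_bcontfun (F x') y = 0" if "x' \<in> S - {x}" for x'
      using disj x that unfolding disjoint_family_on_def by blast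
    then have "apply_bcontfun (\<Sum>x\<in>S. scaleK_bcontfun (c x) (F x)) y = c x * apply_bcontfun (F x) y"
      using x \<open>finite S\<close> by (simp add: apply_bcontfun_sum sum.remove)
    also have "norm \<dots> \<le> r * 1"
      unfolding norm_mult using x assms(2-4) order_trans[OF norm_bounded[of "F x" y]]
      by (intro mult_mono) auto
    finally show ?thesis by simp
  next
    case False
    then show ?thesis using \<open>r \<ge> 0\<close> by (simp add: apply_bcontfun_sum)
  qed
qed

lemma countable_bcontfun_dual_support:
  fixes F :: "'b \<Rightarrow> ('a::topological_space \<Rightarrow>\<^sub>C 'k::real_normed_field)"
  assumes \<phi>: "\<phi> \<in> bcontfun_dual" and "\<And>x. x \<in> D \<Longrightarrow> norm (F x) \<le> 1"
    and disj: "disjoint_family_on (\<lambda>x. {y. apply_bcontfun (F x) y \<noteq> 0}) D"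
  shows "countable {x\<in>D. \<phi> (F x) \<noteq> 0}"
proof -
  obtain B where "B \<ge> 0" and bound: "\<And>f. norm (\<phi> f) \<le> B * norm f"
    using bcontfun_dual_boundE[OF \<phi>] by metis
  define A where "A n = {x\<in>D. inverse (Suc n) < norm (\<phi> (F x))}" for n :: nat
  have "card S \<le> nat \<lceil>B * Suc n\<rceil>" if "finite S" "S \<subseteq> A n" for S n
  proof -
    let ?u = "\<Sum>x\<in>S. scaleK_bcontfun (inverse (\<phi> (F x))) (F x)"
    have nonzero: "\<phi> (F x) \<noteq> 0" and inverse_bound: "norm (inverse (\<phi> (F x))) \<le> Suc n" if "x \<in> S" for x
    proof -
      have "inverse (Suc n) < norm (\<phi> (F x))"
        using \<open>S \<subseteq> A n\<close> that unfolding A_def by blast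
      then show "\<phi> (F x) \<noteq> 0" "norm (inverse (\<phi> (F x))) \<le> Suc n"
        using less_imp_inverse_less[of "inverse (Suc n)"] by (force simp: norm_inverse)+
    qed
    have "S \<subseteq> D"
      using \<open>S \<subseteq> A n\<close> unfolding A_def by blast
    have "norm ?u \<le> Suc n"
      by (rule norm_sum_disjoint_supports_le[OF \<open>finite S\<close> _ _ _ disjoint_family_on_mono[OF \<open>S \<subseteq> D\<close> disj]])
        (use \<open>S \<subseteq> D\<close> assms(2) inverse_bound in auto)
    have "real (card S) = norm (\<phi> ?u)"
      using nonzero by (simp add: bcontfun_dual_sum[OF \<phi>] bcontfun_dual_scaleK[OF \<phi>])
    also have "\<dots> \<le> B * Suc n"
      using bound[of ?u] \<open>norm ?u \<le> Suc n\<close> \<open>B \<ge> 0\<close> by (meson mult_left_mono order_trans)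
    finally show ?thesis
      by (metis of_nat_le_iff order_trans real_nat_ceiling_ge)
  qed
  then have "finite (A n)" for n
    by (metis finite_if_finite_subsets_card_bdd)
  then have "countable (\<Union>n. A n)"
    by (simp add: countable_finite)
  moreover have "{x\<in>D. \<phi> (F x) \<noteq> 0} \<subseteq> (\<Union>n. A n)"
  proof safe
    fix x assume "x \<in> D" "\<phi> (F x) \<noteq> 0"
    then have "0 < norm (\<phi> (F x))" by simp
    then obtain n where "1 / Suc n < norm (\<phi> (F x))"
      by (rule nat_approx_posE)
    then have "x \<in> A n"
      using \<open>x \<in> D\<close> by (simp add: A_def inverse_eq_divide)
    then show "x \<in> (\<Union>n. A n)" by blast
  qed
  ultimately show ?thesis
    by (rule countable_subset[rotated])
qed

definition bump_bcontfun :: "'a::metric_space \<Rightarrow> real \<Rightarrow> ('a \<Rightarrow>\<^sub>C 'k::real_normed_field)" where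
  "bump_bcontfun x r = Bcontfun (\<lambda>y. of_real (max 0 (1 - dist x y / r)))"

lemma apply_bump_bcontfun:
  fixes x :: "'a::metric_space"
  assumes "r > 0"
  shows "apply_bcontfun (bump_bcontfun x r :: 'a \<Rightarrow>\<^sub>C 'k::real_normed_field) y =
    of_real (max 0 (1 - dist x y / r))"
proof -
  have "(\<lambda>y. of_real (max 0 (1 - dist x y / r)) :: 'k) \<in> bcontfun"
    using assms by (intro bcontfun_normI[where b = 1] continuous_intros) auto
  then show ?thesis
    unfolding bump_bcontfun_def by (simp add: Bcontfun_inverse)
qed

lemma norm_bump_bcontfun_le: "r > 0 \<Longrightarrow> norm (bump_bcontfun x r) \<le> 1"
  by (rule norm_bound) (simp add: apply_bump_bcontfun)

lemma bump_bcontfun_nonzero: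
  assumes "r > 0"
  shows "(bump_bcontfun x r :: 'a::metric_space \<Rightarrow>\<^sub>C 'k::real_normed_field) \<noteq> 0"
proof
  assume "(bump_bcontfun x r :: 'a \<Rightarrow>\<^sub>C 'k) = 0"
  then have "apply_bcontfun (bump_bcontfun x r :: 'a \<Rightarrow>\<^sub>C 'k) x = 0" by simp
  with assms show False by (simp add: apply_bump_bcontfun)
qed

lemma bump_bcontfun_support: "r > 0 \<Longrightarrow> apply_bcontfun (bump_bcontfun x r) y \<noteq> 0 \<Longrightarrow> dist x y < r"
  by (simp add: apply_bump_bcontfun max_def split: if_splits)

lemma separable_space_if_separating_bcontfun_dual:
  fixes \<phi> :: "nat \<Rightarrow> ('a::metric_space \<Rightarrow>\<^sub>C 'k::real_normed_field) \<Rightarrow> 'k"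
  assumes dual: "\<And>n. \<phi> n \<in> bcontfun_dual"
    and separating: "\<And>f. (\<And>n. \<phi> n f = 0) \<Longrightarrow> f = 0"
  shows "separable_space (euclidean :: 'a topology)"
proof (rule separable_space_if_separated_sets_countable)
  fix e and D :: "'a set"
  assume "e > 0" and sep: "pairwise (\<lambda>x x'. e \<le> dist x x') D"
  define F :: "'a \<Rightarrow> ('a \<Rightarrow>\<^sub>C 'k)" where "F x = bump_bcontfun x (e / 2)" for x
  have "x = x'" if "x \<in> D" "x' \<in> D" "apply_bcontfun (F x) y \<noteq> 0" "apply_bcontfun (F x') y \<noteq> 0"
    for x x' y
  proof -
    have "dist x y < e / 2" "dist x' y < e / 2"
      using that \<open>e > 0\<close> bump_bcontfun_support unfolding F_def by (metis half_gt_zero)+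
    then have "dist x x' < e"
      using dist_triangle2[of x x' y] by linarith
    then show ?thesis
      using sep that unfolding pairwise_def by force
  qed
  then have "disjoint_family_on (\<lambda>x. {y. apply_bcontfun (F x) y \<noteq> 0}) D"
    unfolding disjoint_family_on_def by blast
  then have "countable {x\<in>D. \<phi> n (F x) \<noteq> 0}" for n
    using dual \<open>e > 0\<close> by (intro countable_bcontfun_dual_support) (simp_all add: F_def norm_bump_bcontfun_le)
  then have "countable (\<Union>n. {x\<in>D. \<phi> n (F x) \<noteq> 0})" by simp
  moreover have "D \<subseteq> (\<Union>n. {x\<in>D. \<phi> n (F x) \<noteq> 0})"
  proof
    fix x assume "x \<in> D"
    have "F x \<noteq> 0" using \<open>e > 0\<close> by (simp add: F_def bump_bcontfun_nonzero)
    then obtain n where "\<phi> n (F x) \<noteq> 0" using separating by blast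
    with \<open>x \<in> D\<close> show "x \<in> (\<Union>n. {x\<in>D. \<phi> n (F x) \<noteq> 0})" by blast
  qed
  ultimately show "countable D"
    by (rule countable_subset[rotated])
qed

locale isometric_shift_bcontfun =
  fixes T :: "('a::metric_space \<Rightarrow>\<^sub>C 'k::{real_normed_field,banach}) \<Rightarrow> ('a \<Rightarrow>\<^sub>C 'k)"
  assumes isometric_shift: "isometric_shift T"
begin

lemma T_add: "T (f + g) = T f + T g"
  using isometric_shift unfolding isometric_shift_def by (elim conjE allE)

lemma T_scaleK: "T (scaleK_bcontfun c f) = scaleK_bcontfun c (T f)"
  using isometric_shift unfolding isometric_shift_def by (elim conjE allE)

lemma norm_T: "norm (T f) = norm f"
  using isometric_shift unfolding isometric_shift_def by (elim conjE allE)

lemma codimension_one: "\<exists>g. g \<notin> range T \<and> (\<forall>f. \<exists>h c. f = T h + scaleK_bcontfun c g)"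
  using isometric_shift unfolding isometric_shift_def by (elim conjE)

lemma Inter_range_funpow: "(\<Inter>n\<in>{1..}. range (T ^^ n)) = {0}"
  using isometric_shift unfolding isometric_shift_def by (elim conjE)

sublocale T: bounded_linear T
  by (rule bounded_linear_intro[where K = 1]) (simp_all add: T_add T_scaleK norm_T scaleR_eq_scaleK_bcontfun)

lemma inj_T: "inj T"
proof (rule injI)
  fix f g assume "T f = T g"
  then have "norm (f - g) = 0"
    using norm_T[of "f - g"] by (simp add: T.diff)
  then show "f = g" by simp
qed

lemma closed_range_T: "closed (range T)"
proof -
  have "complete (range T)"
    by (rule complete_isometric_image[where e = 1]) (simp_all add: T.bounded_linear_axioms norm_T complete_UNIV)
  then show ?thesis by (rule complete_imp_closed)
qed

definition complement :: "'a \<Rightarrow>\<^sub>C 'k" where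
  "complement = (SOME g. g \<notin> range T \<and> (\<forall>f. \<exists>h c. f = T h + scaleK_bcontfun c g))"

lemma complement_notin_range: "complement \<notin> range T"
  and decomposition_exists: "\<exists>h c. f = T h + scaleK_bcontfun c complement"
  using someI_ex[OF codimension_one] unfolding complement_def by blast+

definition gap :: real where
  "gap = infdist complement (range T)"

lemma gap_pos: "gap > 0"
proof -
  have "gap \<noteq> 0"
    using in_closed_iff_infdist_zero[OF closed_range_T, of complement] complement_notin_range
    unfolding gap_def by simp
  then show ?thesis
    using infdist_nonneg[of complement "range T"] unfolding gap_def by linarith
qed

lemma gap_le: "gap \<le> norm (complement - T h)"
  unfolding gap_def dist_norm[symmetric] by (rule infdist_le) (rule rangeI)

lemma decomposition_unique:
  assumes "T h + scaleK_bcontfun c complement = T h' + scaleK_bcontfun c' complement"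
  shows "h = h'" "c = c'"
proof -
  show "c = c'"
  proof (rule ccontr)
    assume "c \<noteq> c'"
    then have "complement = T (scaleK_bcontfun (inverse (c' - c)) (h - h'))"
      using arg_cong[OF assms, of "\<lambda>f. apply_bcontfun f _"]
      by (intro bcontfun_eqI) (simp add: T_scaleK T.diff field_simps)
    then show False using complement_notin_range by blast
  qed
  then show "h = h'"
    using assms inj_T by (simp add: inj_eq)
qed

definition coeff :: "('a \<Rightarrow>\<^sub>C 'k) \<Rightarrow> 'k" where
  "coeff f = (THE c. \<exists>h. f = T h + scaleK_bcontfun c complement)"

definition unshift :: "('a \<Rightarrow>\<^sub>C 'k) \<Rightarrow> ('a \<Rightarrow>\<^sub>C 'k)" where
  "unshift f = (THE h. \<exists>c. f = T h + scaleK_bcontfun c complement)"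

lemma unshift_coeff_eq:
  assumes "f = T h + scaleK_bcontfun c complement"
  shows "unshift f = h" "coeff f = c"
proof -
  show "unshift f = h"
    unfolding unshift_def
  proof (rule the_equality)
    fix h' assume "\<exists>c'. f = T h' + scaleK_bcontfun c' complement"
    then show "h' = h" using assms decomposition_unique(1) by metis
  qed (use assms in blast)
  show "coeff f = c"
    unfolding coeff_def
  proof (rule the_equality)
    fix c' assume "\<exists>h'. f = T h' + scaleK_bcontfun c' complement"
    then show "c' = c" using assms decomposition_unique(2) by metis
  qed (use assms in blast)
qed

lemma decomposition: "f = T (unshift f) + scaleK_bcontfun (coeff f) complement"
proof -
  obtain h c where "f = T h + scaleK_bcontfun c complement"
    using decomposition_exists by blast
  with unshift_coeff_eq[OF this] show ?thesis by simp
qed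

lemma unshift_add: "unshift (f + g) = unshift f + unshift g"
  and coeff_add: "coeff (f + g) = coeff f + coeff g"
proof -
  have "f + g = T (unshift f + unshift g) + scaleK_bcontfun (coeff f + coeff g) complement"
    by (subst (1 2) decomposition) (rule bcontfun_eqI, simp add: T_add algebra_simps)
  then show "unshift (f + g) = unshift f + unshift g" "coeff (f + g) = coeff f + coeff g"
    by (rule unshift_coeff_eq)+
qed

lemma unshift_scaleK: "unshift (scaleK_bcontfun a f) = scaleK_bcontfun a (unshift f)"
  and coeff_scaleK: "coeff (scaleK_bcontfun a f) = a * coeff f"
proof -
  have "scaleK_bcontfun a f = T (scaleK_bcontfun a (unshift f)) + scaleK_bcontfun (a * coeff f) complement"
    by (subst decomposition) (rule bcontfun_eqI, simp add: T_scaleK algebra_simps)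
  then show "unshift (scaleK_bcontfun a f) = scaleK_bcontfun a (unshift f)"
    "coeff (scaleK_bcontfun a f) = a * coeff f"
    by (rule unshift_coeff_eq)+
qed

lemma norm_coeff_le: "norm (coeff f) * gap \<le> norm f"
proof (cases "coeff f = 0")
  case False
  define u where "u = scaleK_bcontfun (- inverse (coeff f)) (unshift f)"
  have "f = scaleK_bcontfun (coeff f) (complement - T u)"
    using False by (subst decomposition) (rule bcontfun_eqI, simp add: u_def T_scaleK field_simps)
  then have "norm f = norm (coeff f) * norm (complement - T u)"
    by (metis norm_scaleK_bcontfun)
  then show ?thesis
    using gap_le[of u] by (simp add: mult_left_mono)
qed (simp add: gap_pos)

definition unshift_bound :: real where
  "unshift_bound = 1 + norm complement / gap"

lemma norm_unshift_le: "norm (unshift f) \<le> unshift_bound * norm f"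
proof -
  have "norm (unshift f) = norm (f - scaleK_bcontfun (coeff f) complement)"
    using decomposition[of f] by (metis add_diff_cancel_right' norm_T)
  also have "\<dots> \<le> norm f + norm (coeff f) * norm complement"
    by (metis norm_triangle_ineq4 norm_scaleK_bcontfun)
  also have "norm (coeff f) \<le> norm f / gap"
    using norm_coeff_le[of f] gap_pos by (simp add: field_simps)
  then have "norm (coeff f) * norm complement \<le> norm f / gap * norm complement"
    by (rule mult_right_mono) simp
  finally show ?thesis
    unfolding unshift_bound_def by (simp add: field_simps)
qed

text \<open>The n-th coordinate of f in the formal expansion f = sum of c_n T^n complement.\<close>

definition shift_coeff :: "nat \<Rightarrow> ('a \<Rightarrow>\<^sub>C 'k) \<Rightarrow> 'k" where
  "shift_coeff n f = coeff ((unshift ^^ n) f)"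

lemma shift_coeff_in_dual: "shift_coeff n \<in> bcontfun_dual"
proof (rule bcontfun_dualI)
  have "(unshift ^^ n) (f + g) = (unshift ^^ n) f + (unshift ^^ n) g" for f g
    by (induction n) (simp_all add: unshift_add)
  then show "shift_coeff n (f + g) = shift_coeff n f + shift_coeff n g" for f g
    by (simp add: shift_coeff_def coeff_add)
  have "(unshift ^^ n) (scaleK_bcontfun c f) = scaleK_bcontfun c ((unshift ^^ n) f)" for c f
    by (induction n) (simp_all add: unshift_scaleK)
  then show "shift_coeff n (scaleK_bcontfun c f) = c * shift_coeff n f" for c f
    by (simp add: shift_coeff_def coeff_scaleK)
  have power_bound: "norm ((unshift ^^ n) f) \<le> unshift_bound ^ n * norm f" for f
  proof (induction n)
    case (Suc n)
    have "unshift_bound \<ge> 0"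
      using gap_pos by (simp add: unshift_bound_def)
    then show ?case
      using norm_unshift_le[of "(unshift ^^ n) f"] Suc
      by (simp add: mult.assoc order_trans mult_left_mono)
  qed simp
  show "norm (shift_coeff n f) \<le> unshift_bound ^ n / gap * norm f" for f
    using order_trans[OF norm_coeff_le power_bound] gap_pos
    by (simp add: shift_coeff_def field_simps)
qed

lemma shift_coeffs_separating:
  assumes "\<And>n. shift_coeff n f = 0"
  shows "f = 0"
proof -
  have "f = (T ^^ n) ((unshift ^^ n) f)" for n
  proof (induction n)
    case (Suc n)
    have "T (unshift ((unshift ^^ n) f)) = (unshift ^^ n) f"
      using decomposition[of "(unshift ^^ n) f"] assms[of n] by (simp add: shift_coeff_def)
    then show ?case
      using Suc by (simp add: funpow_swap1)
  qed simp
  then have "f \<in> (\<Inter>n\<in>{1..}. range (T ^^ n))"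
    by (metis INT_I rangeI)
  then show ?thesis
    unfolding Inter_range_funpow by simp
qed

end

lemma separable_space_if_isometric_shift:
  fixes T :: "('a::metric_space \<Rightarrow>\<^sub>C 'k::{real_normed_field,banach}) \<Rightarrow> ('a \<Rightarrow>\<^sub>C 'k)"
  assumes "isometric_shift T"
  shows "separable_space (euclidean :: 'a topology)"
proof -
  interpret isometric_shift_bcontfun T
    using assms by unfold_locales
  show ?thesis
    using separable_space_if_separating_bcontfun_dual shift_coeff_in_dual shift_coeffs_separating
    by blast
qed

theorem theorem1:
  fixes M_witness :: "'a::{metric_space, complete_space} itself"
  assumes "(\<exists>T :: ('a \<Rightarrow>\<^sub>C real) \<Rightarrow> ('a \<Rightarrow>\<^sub>C real). isometric_shift T)
         \<or> (\<exists>T :: ('a \<Rightarrow>\<^sub>C complex) \<Rightarrow> ('a \<Rightarrow>\<^sub>C complex). isometric_shift T)"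
  shows "separable_space (euclidean :: 'a topology)"
  using assms separable_space_if_isometric_shift[where 'k = real]
    separable_space_if_isometric_shift[where 'k = complex]
  by blast

end
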